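(* Let $p$ be an odd prime and take $k=1$. For every $s\ge3$ and $0\le t\le p-1$, the $p$-Fibonacci number of the vertex $V_{s,t}=\lambda\big(p(2sp-(2s+1)),\,p(sp-(s+1))+t\big)$ is $$\mathcal M_{V_{s,t}}=\begin{cases}\dfrac{p^{s-3}(p-1)}{2}\Big(2(s-1)p^2+2t-(2s-5)\Big), & 0\le t<\frac{p-1}{2},\\[6pt] \dfrac{p^{s-3}(p-1)}{2}\Big(2(s-1)p^2+2t-2p-(2s-5)\Big), & \frac{p-1}{2}\le t\le p-1.\end{cases}$$
   Context: Fix an odd prime $p$ and an integer $k\ge 0$. For integers $0\le i<n$ write $\lambda(n,i)=(n-i,1^i)$ for the hook partition of $n$ with $n-i$ boxes in its first row and $i$ further boxes in its first column. If $\mu=\lambda(n',i')$ is obtained from $\lambda(n,i)$ by appending $m=(n'-i')-(n-i)\ge 0$ boxes to the first row and $n''=i'-i\ge 0$ boxes to the first column, we say $\mu$ is obtained by adding the block $B_{m,n''}$ ($m$ horizontal nodes, $n''$ vertical nodes). Put $x_s=p^k(sp-(s+1))$. The relevant part ("column $k$") of the $p$-Bratteli diagram is the graded directed graph with vertices: on floor $2k+1$, $S_i=\lambda(p^k(p-1),i)$ for $0\le i<p^k(p-1)$; on floor $2(k+s)$ ($s\ge1$), $V_{s,l}=\lambda\big(p^k(2sp-(2s+1)),\,x_s+l\big)$ for $0\le l<p^k$; on floor $2(k+s)-1$ ($s\ge2$), $W_{s,l'}=\lambda\big(p^k((2s-1)p-2s),\,x_{s-1}+l'\big)$ for $0\le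 l'<p^{k+1}$; and edges, each labelled by the block added: (E1) $S_i\to V_{1,l}$ exactly when $i=p^kt+l$ with $0\le t\le p-2$, block $B_{p^kt,\,p^k(p-2-t)}$; (E2) for $s\ge2$, $0\le l<p^k$, $0\le\beta\le p-1$: $V_{s-1,l}\to W_{s,pl+\beta}$, block $B_{p^k(p-1)-((p-1)l+\beta),\,(p-1)l+\beta}$; (E3) for $s\ge 2$, $0\le l'<p^{k+1}$ and $t=\lfloor l'/p^k\rfloor$: $W_{s,l'}\to V_{s,l'-p^kt}$, block $B_{p^kt,\,p^k(p-1-t)}$. A path ending at a vertex $v$ is a sequence of edges starting at some $S_i$ and going up one floor at a time to $v$ ($S_i\to V_{1,\cdot}\to W_{2,\cdot}\to V_{2,\cdot}\to W_{3,\cdot}\to\cdots\to v$); $\mathcal P(v)$ is the set of all paths ending at $v$. The blocks of a path are numbered $B^2,B^3,\dots,B^N$: $B^2$ is the block of the edge leaving $S_i$, and for $j\ge2$, $B^{2j-1}$ is the block of the edge into $W_{j,\cdot}$ and $B^{2j}$ the block of the edge into $V_{j,\cdot}$. Write $B^j=B_{m_j,n_j}$. Descents: $1\in\mathrm{Des}(P)$ iff $m_2=p^kt$ with $0\le t<\frac{p-1}{2}$; $2\notin\mathrm{Des}(P)$; for $3\le j<N$, $j\in\mathrm{Des}(P)$ iff $m_j>m_{j+1}$ and $n_j<n_{j+1}$. $\mathrm{des}(P)=|\mathrm{Des}(P)|$. The $p^k$-Fibonacci number of a vertex $v$ is $\mathcal M_v=\sum_{P\in\mathcal P(v)}\mathrm{des}(P)$.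 *)

theory Defs
  imports Complex_Main "HOL-Computational_Algebra.Primes"
begin

text \<open>Vertices of column k of the p-Bratteli diagram, by their labels:
  S i = S_i (floor 2k+1), V s l = V_{s,l} (floor 2(k+s)), W s l' = W_{s,l'} (floor 2(k+s)-1).
  A block B_{m,n} is represented by the pair (m, n).\<close>
datatype vertex = S nat | V nat nat | W nat nat

type_synonym block = "nat \<times> nat"

fun edge :: "nat \<Rightarrow> nat \<Rightarrow> vertex \<Rightarrow> vertex \<Rightarrow> block \<Rightarrow> bool" where
  "edge p k (S i) (V s l) b \<longleftrightarrow>
     s = 1 \<and> i < p^k * (p - 1) \<and> l < p^k \<and>
     (\<exists>t. t \<le> p - 2 \<and> i = p^k * t + l \<and> b = (p^k * t, p^k * (p - 2 - t)))"
| "edge p k (V s l) (W s' l') b \<longleftrightarrow>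
     s' = s + 1 \<and> s \<ge> 1 \<and> l < p^k \<and>
     (\<exists>\<beta>. \<beta> \<le> p - 1 \<and> l' = p * l + \<beta> \<and>
        b = (p^k * (p - 1) - ((p - 1) * l + \<beta>), (p - 1) * l + \<beta>))"
| "edge p k (W s l') (V s' l) b \<longleftrightarrow>
     s' = s \<and> s \<ge> 2 \<and> l' < p^(k+1) \<and>
     (let t = l' div p^k in l = l' - p^k * t \<and> b = (p^k * t, p^k * (p - 1 - t)))"
| "edge p k _ _ _ \<longleftrightarrow> False"

definition is_S :: "vertex \<Rightarrow> bool" where
  "is_S v \<longleftrightarrow> (\<exists>i. v = S i)"

text \<open>A path is a list of vertices vs (starting at some S_i) together with the list bs of
  blocks of its consecutive edges; bs ! 0 = B^2, bs ! 1 = B^3, ..., i.e. B^j = bs ! (j - 2),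
  and N = length bs + 1.\<close>
definition is_path :: "nat \<Rightarrow> nat \<Rightarrow> vertex list \<Rightarrow> block list \<Rightarrow> bool" where
  "is_path p k vs bs \<longleftrightarrow> vs \<noteq> [] \<and> is_S (hd vs) \<and> length bs + 1 = length vs \<and>
     (\<forall>j < length bs. edge p k (vs ! j) (vs ! (j + 1)) (bs ! j))"

definition paths :: "nat \<Rightarrow> nat \<Rightarrow> vertex \<Rightarrow> (vertex list \<times> block list) set" where
  "paths p k v = {(vs, bs). is_path p k vs bs \<and> last vs = v}"

definition Des :: "nat \<Rightarrow> nat \<Rightarrow> block list \<Rightarrow> nat set" where
  "Des p k bs = {j. (j = 1 \<and> (\<exists>t. fst (bs ! 0) = p^k * t \<and> real t < (real p - 1) / 2))
      \<or> (3 \<le> j \<and> j < length bs + 1 \<and>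
         fst (bs ! (j - 2)) > fst (bs ! (j - 1)) \<and> snd (bs ! (j - 2)) < snd (bs ! (j - 1)))}"

definition des :: "nat \<Rightarrow> nat \<Rightarrow> block list \<Rightarrow> nat" where
  "des p k bs = card (Des p k bs)"

definition fibM :: "nat \<Rightarrow> nat \<Rightarrow> vertex \<Rightarrow> nat" where
  "fibM p k v = (\<Sum>P \<in> paths p k v. des p k (snd P))"

end

theory Submission
  imports Defs
begin

text \<open>For k = 1, every path to V_{s+1,c} (s \<ge> 1) is uniquely a path to some V_{s,b}, b < p,
  followed by the two edges V_{s,b} \<rightarrow> W_{s+1,pb+c} \<rightarrow> V_{s+1,c}. Appending their two blocks
  creates at most two descents: an inner one, depending only on b and c, and (for s \<ge> 2) one at the
  junction with the previous last block, which is the block of the edge into V_{s,b} and so depends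
  only on the index a of the vertex V_{s-1,a} it came from. Each V_{s,b} is reached by (p-1)p^(s-1)
  paths, spread evenly over the p values of a, so M satisfies a linear recurrence whose coefficients
  count inner and junction descents; for p = 2h+1 these counts are h + [c < h] and ph + c. Solving the
  recurrence first for the sum of M over a level, then for a single vertex, gives the closed form.\<close>

definition VW_block :: "nat \<Rightarrow> nat \<Rightarrow> nat \<Rightarrow> block" where
  "VW_block p b c = (p * (p - 1) - ((p - 1) * b + c), (p - 1) * b + c)"

definition WV_block :: "nat \<Rightarrow> nat \<Rightarrow> block" where
  "WV_block p b = (p * b, p * (p - 1 - b))"

definition descent_pair :: "block \<Rightarrow> block \<Rightarrow> bool" where
  "descent_pair x y \<longleftrightarrow> fst y < fst x \<and> snd x < snd y"

definition initial_path :: "nat \<Rightarrow> nat \<Rightarrow> nat \<Rightarrow> nat \<Rightarrow> vertex list \<times> block list" where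
  "initial_path p k b t = ([S (p ^ k * t + b), V 1 b], [(p ^ k * t, p ^ k * (p - 2 - t))])"

definition extend_path ::
    "nat \<Rightarrow> nat \<Rightarrow> nat \<Rightarrow> nat \<Rightarrow> vertex list \<times> block list \<Rightarrow> vertex list \<times> block list" where
  "extend_path p s b c P =
     (fst P @ [W (Suc s) (p * b + c), V (Suc s) c], snd P @ [VW_block p b c, WV_block p b])"

lemma is_path_snoc:
  assumes "vs \<noteq> []"
  shows "is_path p k (vs @ [v]) (bs @ [b]) \<longleftrightarrow> is_path p k vs bs \<and> edge p k (last vs) v b"
proof (cases "length bs + 1 = length vs")
  case True
  then have "last vs = vs ! length bs"
    by (metis assms add_diff_cancel_right' last_conv_nth)
  moreover have "(\<forall>j < Suc (length bs). Q j) \<longleftrightarrow> (\<forall>j < length bs. Q j) \<and> Q (length bs)" for Q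
    using less_Suc_eq by auto
  ultimately show ?thesis
    using True assms by (auto simp: is_path_def nth_append simp del: edge.simps)
qed (auto simp: is_path_def)

lemma is_path_snocE:
  assumes "is_path p k vs' bs'" "\<not> is_S (last vs')"
  obtains vs v bs b where "vs' = vs @ [v]" "bs' = bs @ [b]" "vs \<noteq> []"
    "is_path p k vs bs" "edge p k (last vs) v b"
proof -
  have "bs' \<noteq> []"
    using assms by (cases vs') (auto simp: is_path_def)
  then obtain bs b where bs': "bs' = bs @ [b]"
    by (metis rev_exhaust)
  moreover obtain vs v where vs': "vs' = vs @ [v]"
    using assms by (cases vs' rule: rev_cases) (auto simp: is_path_def)
  ultimately have "length vs = Suc (length bs)"
    using assms by (simp add: is_path_def)
  then have "vs \<noteq> []"
    by auto
  with assms bs' vs' show ?thesis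
    using that is_path_snoc by blast
qed

lemma is_path_last_S:
  assumes "is_path p k vs bs" "last vs = S i"
  shows "vs = [S i]" "bs = []"
proof -
  have len: "length vs = Suc (length bs)" and "vs \<noteq> []"
    using assms(1) by (auto simp: is_path_def)
  then have last: "vs ! length bs = S i"
    using assms(2) by (simp add: last_conv_nth)
  show "bs = []"
  proof (rule ccontr)
    assume "bs \<noteq> []"
    then have "edge p k (vs ! (length bs - 1)) (vs ! length bs) (bs ! (length bs - 1))"
      using assms(1) by (auto simp: is_path_def dest: spec[of _ "length bs - 1"])
    then show False
      using last by (cases "vs ! (length bs - 1)") auto
  qed
  with len assms(2) show "vs = [S i]"
    by (cases vs) auto
qed

lemma paths_V_1:
  assumes "b < p ^ k" "p \<ge> 2"
  shows "paths p k (V 1 b) = initial_path p k b ` {..p - 2}"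
proof (intro equalityI subsetI)
  fix P assume "P \<in> paths p k (V 1 b)"
  then obtain vs' bs' where P: "P = (vs', bs')" "is_path p k vs' bs'" "last vs' = V 1 b"
    by (auto simp: paths_def)
  obtain vs bs b0 where vs': "vs' = vs @ [V 1 b]" "bs' = bs @ [b0]" "vs \<noteq> []"
      and path: "is_path p k vs bs" and e: "edge p k (last vs) (V 1 b) b0"
    by (rule is_path_snocE[OF P(2)]) (use P(3) in \<open>auto simp: is_S_def\<close>)
  obtain i where i: "last vs = S i"
    using e by (cases "last vs") auto
  with P vs' e is_path_last_S[OF path i] show "P \<in> initial_path p k b ` {..p - 2}"
    by (auto simp: initial_path_def)
next
  fix P assume "P \<in> initial_path p k b ` {..p - 2}"
  then obtain t where t: "t \<le> p - 2"
      and P: "P = ([S (p ^ k * t + b), V 1 b], [(p ^ k * t, p ^ k * (p - 2 - t))])"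
    by (auto simp: initial_path_def)
  have "p ^ k * t + b < p ^ k * (t + 1)"
    using assms by simp
  also have "\<dots> \<le> p ^ k * (p - 1)"
    using t assms by (intro mult_le_mono2) simp
  finally have "edge p k (S (p ^ k * t + b)) (V 1 b) (p ^ k * t, p ^ k * (p - 2 - t))"
    using t assms by auto
  then show "P \<in> paths p k (V 1 b)"
    using is_path_snoc[of "[S (p ^ k * t + b)]" p k "V 1 b" "[]"] P
    by (simp add: paths_def is_path_def is_S_def del: edge.simps)
qed

lemma paths_V_Suc:
  assumes "s \<ge> 1" "c < p"
  shows "paths p 1 (V (Suc s) c) = (\<Union>b<p. extend_path p s b c ` paths p 1 (V s b))"
proof (intro equalityI subsetI)
  fix P assume "P \<in> paths p 1 (V (Suc s) c)"
  then obtain vs'' bs'' where P: "P = (vs'', bs'')" "is_path p 1 vs'' bs''" "last vs'' = V (Suc s) c"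
    by (auto simp: paths_def)
  obtain vs' bs' b1 where vs'': "vs'' = vs' @ [V (Suc s) c]" "bs'' = bs' @ [b1]"
      and path': "is_path p 1 vs' bs'" and e1: "edge p 1 (last vs') (V (Suc s) c) b1"
    by (rule is_path_snocE[OF P(2)]) (use P(3) in \<open>auto simp: is_S_def\<close>)
  obtain l' where l': "last vs' = W (Suc s) l'" "l' < p ^ 2"
      "b1 = (p * (l' div p), p * (p - 1 - l' div p))" "c = l' - p * (l' div p)"
    using e1 assms(1) by (cases "last vs'") (auto simp: Let_def power2_eq_square)
  obtain vs bs b0 where vs': "vs' = vs @ [W (Suc s) l']" "bs' = bs @ [b0]"
      and path: "is_path p 1 vs bs" and e0: "edge p 1 (last vs) (W (Suc s) l') b0"
    by (rule is_path_snocE[OF path']) (use l'(1) in \<open>auto simp: is_S_def\<close>)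
  obtain l \<beta> where l: "last vs = V s l" "l < p" "\<beta> \<le> p - 1" "l' = p * l + \<beta>"
      "b0 = (p * (p - 1) - ((p - 1) * l + \<beta>), (p - 1) * l + \<beta>)"
    using e0 by (cases "last vs") auto
  have "\<beta> < p"
    using l(3) assms(2) by linarith
  then have "l' div p = l" "c = \<beta>"
    using l(4) l'(4) by auto
  then have "P = extend_path p s l c (vs, bs)"
    using P(1) vs'' vs' l l' by (simp add: extend_path_def VW_block_def WV_block_def)
  moreover have "(vs, bs) \<in> paths p 1 (V s l)"
    using path l(1) by (simp add: paths_def)
  ultimately show "P \<in> (\<Union>b<p. extend_path p s b c ` paths p 1 (V s b))"
    using l(2) by blast
next
  fix P assume "P \<in> (\<Union>b<p. extend_path p s b c ` paths p 1 (V s b))"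
  then obtain b vs bs where b: "b < p" and path: "is_path p 1 vs bs" "last vs = V s b"
      and P: "P = extend_path p s b c (vs, bs)"
    by (auto simp: paths_def)
  have "p * b + c < p * (b + 1)"
    using assms by simp
  also have "\<dots> \<le> p * p"
    using b by (intro mult_le_mono2) simp
  finally have "p * b + c < p ^ 2"
    by (simp add: power2_eq_square)
  moreover have "(p * b + c) div p = b"
    using assms by simp
  ultimately have "edge p 1 (V s b) (W (Suc s) (p * b + c)) (VW_block p b c)"
      and "edge p 1 (W (Suc s) (p * b + c)) (V (Suc s) c) (WV_block p b)"
    using assms b by (auto simp: VW_block_def WV_block_def Let_def power2_eq_square)
  moreover have "vs \<noteq> []"
    using path by (simp add: is_path_def)
  ultimately have "is_path p 1 ((vs @ [W (Suc s) (p * b + c)]) @ [V (Suc s) c])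
      ((bs @ [VW_block p b c]) @ [WV_block p b])"
    using path is_path_snoc[of vs] is_path_snoc[of "vs @ [W (Suc s) (p * b + c)]"]
    by (simp del: edge.simps append_assoc)
  then show "P \<in> paths p 1 (V (Suc s) c)"
    using P by (simp add: paths_def extend_path_def)
qed

lemma Des_subset_atMost: "bs \<noteq> [] \<Longrightarrow> Des p k bs \<subseteq> {..length bs}"
  by (auto simp: Des_def Suc_le_eq)

lemma Des_append2:
  assumes "bs \<noteq> []"
  shows "Des p k (bs @ [b1, b2]) = Des p k bs
     \<union> {j. j = length bs + 1 \<and> 2 \<le> length bs \<and> descent_pair (last bs) b1}
     \<union> {j. j = length bs + 2 \<and> descent_pair b1 b2}"
proof (intro set_eqI)
  fix j
  have first: "(bs @ [b1, b2]) ! 0 = bs ! 0"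
    using assms by (simp add: nth_append)
  consider "j \<le> length bs" | "j = length bs + 1" | "j = length bs + 2" | "j > length bs + 2"
    by linarith
  then show "j \<in> Des p k (bs @ [b1, b2]) \<longleftrightarrow> j \<in> Des p k bs
     \<union> {j. j = length bs + 1 \<and> 2 \<le> length bs \<and> descent_pair (last bs) b1}
     \<union> {j. j = length bs + 2 \<and> descent_pair b1 b2}"
  proof cases
    case 1
    moreover have "j - 1 < length bs" "j - 2 < length bs"
      using 1 assms length_greater_0_conv[of bs] by linarith+
    ultimately show ?thesis
      using first by (simp add: Des_def nth_append)
  next
    case 2
    moreover have "last bs = bs ! (length bs - 1)"
      using assms by (simp add: last_conv_nth)
    ultimately show ?thesis
      using assms by (auto simp: Des_def nth_append descent_pair_def)
  next
    case 3
    then show ?thesis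
      using assms by (auto simp: Des_def nth_append descent_pair_def Suc_le_eq)
  next
    case 4
    then show ?thesis
      by (simp add: Des_def)
  qed
qed

lemma des_append2:
  assumes "bs \<noteq> []"
  shows "des p k (bs @ [b1, b2]) = des p k bs
     + of_bool (2 \<le> length bs \<and> descent_pair (last bs) b1) + of_bool (descent_pair b1 b2)"
proof -
  have "finite (Des p k bs)"
    using Des_subset_atMost[OF assms] finite_subset by blast
  moreover have
    "Des p k bs \<inter> {j. j = length bs + 1 \<and> 2 \<le> length bs \<and> descent_pair (last bs) b1} = {}"
    "(Des p k bs \<union> {j. j = length bs + 1 \<and> 2 \<le> length bs \<and> descent_pair (last bs) b1})
       \<inter> {j. j = length bs + 2 \<and> descent_pair b1 b2} = {}"
    using Des_subset_atMost[OF assms, of p k] by auto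
  ultimately show ?thesis
    unfolding des_def Des_append2[OF assms] by (simp add: card_Un_disjoint)
qed

lemma des_single:
  assumes "p > 0"
  shows "des p k [(p ^ k * t, x)] = of_bool (real t < (real p - 1) / 2)"
proof -
  have "Des p k [(p ^ k * t, x)] = (if real t < (real p - 1) / 2 then {1} else {})"
    using assms by (auto simp: Des_def)
  then show ?thesis
    by (simp add: des_def)
qed

lemma extend_path_inj:
  assumes "p > 0" "extend_path p s b c P = extend_path p s b' c Q"
  shows "b = b'" "P = Q"
proof -
  have "fst P = fst Q" "snd P = snd Q" "p * b + c = p * b' + c"
    using assms(2) by (auto simp: extend_path_def)
  then show "b = b'" "P = Q"
    using assms(1) by (simp_all add: prod_eq_iff)
qed

lemma finite_paths_V:
  assumes "p \<ge> 2" "b < p"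
  shows "finite (paths p 1 (V (Suc r) b))"
  using assms
proof (induction r arbitrary: b)
  case 0
  then show ?case
    using paths_V_1[of b p 1] by simp
next
  case (Suc r)
  then show ?case
    using paths_V_Suc[of "Suc r" b p] by simp
qed

lemma sum_paths_V_1:
  assumes "b < p ^ k" "p \<ge> 2"
  shows "(\<Sum>P\<in>paths p k (V 1 b). f P) = (\<Sum>t\<le>p - 2. f (initial_path p k b t))"
proof -
  have "inj_on (initial_path p k b) {..p - 2}"
    using assms by (auto simp: inj_on_def initial_path_def)
  then show ?thesis
    unfolding paths_V_1[OF assms] by (simp add: sum.reindex)
qed

lemma sum_paths_V_Suc:
  assumes "s \<ge> 1" "c < p" "p \<ge> 2"
  shows "(\<Sum>P\<in>paths p 1 (V (Suc s) c). f P) =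
    (\<Sum>b<p. \<Sum>Q\<in>paths p 1 (V s b). f (extend_path p s b c Q))"
proof -
  have p0: "p > 0"
    using assms(3) by simp
  have fin: "finite (extend_path p s b c ` paths p 1 (V s b))" if "b < p" for b
    using finite_paths_V[of p b "s - 1"] assms that by simp
  have inj: "inj_on (extend_path p s b c) (paths p 1 (V s b))" for b
    by (auto simp: inj_on_def dest: extend_path_inj(2)[OF p0])
  have disj: "extend_path p s b c ` paths p 1 (V s b) \<inter> extend_path p s b' c ` paths p 1 (V s b') = {}"
    if "b \<noteq> b'" for b b'
    using that by (auto dest: extend_path_inj(1)[OF p0])
  have "(\<Sum>P\<in>paths p 1 (V (Suc s) c). f P) =
      (\<Sum>b<p. \<Sum>P\<in>extend_path p s b c ` paths p 1 (V s b). f P)"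
    unfolding paths_V_Suc[OF assms(1,2)] using fin disj by (intro sum.UNION_disjoint) auto
  also have "\<dots> = (\<Sum>b<p. \<Sum>Q\<in>paths p 1 (V s b). f (extend_path p s b c Q))"
    using inj by (simp add: sum.reindex)
  finally show ?thesis .
qed

lemma card_paths_V:
  assumes "p \<ge> 2" "b < p"
  shows "card (paths p 1 (V (Suc r) b)) = (p - 1) * p ^ r"
  using assms
proof (induction r arbitrary: b)
  case 0
  have "card (paths p 1 (V 1 b)) = (\<Sum>P\<in>paths p 1 (V 1 b). 1)"
    by (rule card_eq_sum)
  also have "\<dots> = (\<Sum>t\<le>p - 2. 1)"
    using 0 by (intro sum_paths_V_1) simp_all
  finally show ?case
    using 0 by simp
next
  case (Suc r)
  have "card (paths p 1 (V (Suc (Suc r)) b)) = (\<Sum>P\<in>paths p 1 (V (Suc (Suc r)) b). 1)"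
    by (rule card_eq_sum)
  also have "\<dots> = (\<Sum>a<p. \<Sum>Q\<in>paths p 1 (V (Suc r) a). 1)"
    using Suc.prems by (intro sum_paths_V_Suc) simp_all
  also have "\<dots> = (\<Sum>a<p. (p - 1) * p ^ r)"
    using Suc by simp
  finally show ?case
    by simp
qed

lemma length_blocks_paths_V:
  assumes "p \<ge> 2" "b < p" "Q \<in> paths p 1 (V (Suc r) b)"
  shows "length (snd Q) = 2 * r + 1"
  using assms
proof (induction r arbitrary: b Q)
  case 0
  then show ?case
    using paths_V_1[of b p 1] by (auto simp: initial_path_def)
next
  case (Suc r)
  then show ?case
    using paths_V_Suc[of "Suc r" b p] by (auto simp: extend_path_def)
qed

definition inner_descents :: "nat \<Rightarrow> nat \<Rightarrow> nat" where
  "inner_descents p c = (\<Sum>b<p. of_bool (descent_pair (VW_block p b c) (WV_block p b)))"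

definition junction_descents :: "nat \<Rightarrow> nat \<Rightarrow> nat" where
  "junction_descents p c = (\<Sum>b<p. \<Sum>a<p. of_bool (descent_pair (WV_block p a) (VW_block p b c)))"

lemma sum_paths_V_last_block:
  assumes "p \<ge> 2" "b < p" "r \<ge> 1"
  shows "(\<Sum>Q\<in>paths p 1 (V (Suc r) b). f (last (snd Q))) =
    (p - 1) * p ^ (r - 1) * (\<Sum>a<p. f (WV_block p a))"
proof -
  have "(\<Sum>Q\<in>paths p 1 (V (Suc r) b). f (last (snd Q))) =
      (\<Sum>a<p. \<Sum>R\<in>paths p 1 (V r a). f (last (snd (extend_path p r a b R))))"
    using assms by (intro sum_paths_V_Suc) simp_all
  also have "\<dots> = (\<Sum>a<p. card (paths p 1 (V r a)) * f (WV_block p a))"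
    by (simp add: extend_path_def)
  also have "\<dots> = (\<Sum>a<p. (p - 1) * p ^ (r - 1) * f (WV_block p a))"
    using assms card_paths_V[of p _ "r - 1"] by simp
  finally show ?thesis
    by (simp add: sum_distrib_left)
qed

lemma fibM_V_Suc_Suc:
  assumes "p \<ge> 2" "c < p"
  shows "fibM p 1 (V (Suc (Suc r)) c) = (\<Sum>b<p. fibM p 1 (V (Suc r) b))
    + (if r = 0 then 0 else (p - 1) * p ^ (r - 1) * junction_descents p c)
    + (p - 1) * p ^ r * inner_descents p c"
proof -
  let ?junction = "\<lambda>b Q. of_bool (2 \<le> length (snd Q) \<and> descent_pair (last (snd Q)) (VW_block p b c))"
  let ?J = "\<lambda>b. (\<Sum>a<p. of_bool (descent_pair (WV_block p a) (VW_block p b c)))"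
  have junction: "(\<Sum>Q\<in>paths p 1 (V (Suc r) b). ?junction b Q) =
      (if r = 0 then 0 else (p - 1) * p ^ (r - 1) * ?J b)"
    if "b < p" for b
  proof (cases "r = 0")
    case True
    then show ?thesis
      using length_blocks_paths_V[OF assms(1) that] by simp
  next
    case False
    then have "(\<Sum>Q\<in>paths p 1 (V (Suc r) b). ?junction b Q) =
        (\<Sum>Q\<in>paths p 1 (V (Suc r) b). of_bool (descent_pair (last (snd Q)) (VW_block p b c)))"
      using length_blocks_paths_V[OF assms(1) that] by (intro sum.cong) auto
    also have "\<dots> = (p - 1) * p ^ (r - 1) * ?J b"
      using False
      by (intro sum_paths_V_last_block[OF assms(1) that,
            where f = "\<lambda>x. of_bool (descent_pair x (VW_block p b c))"]) simp
    finally show ?thesis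
      using False by simp
  qed
  have "fibM p 1 (V (Suc (Suc r)) c) =
      (\<Sum>b<p. \<Sum>Q\<in>paths p 1 (V (Suc r) b). des p 1 (snd (extend_path p (Suc r) b c Q)))"
    unfolding fibM_def using assms by (intro sum_paths_V_Suc) simp_all
  also have "\<dots> = (\<Sum>b<p. \<Sum>Q\<in>paths p 1 (V (Suc r) b).
      des p 1 (snd Q) + ?junction b Q + of_bool (descent_pair (VW_block p b c) (WV_block p b)))"
  proof (intro sum.cong refl)
    fix b Q
    assume "b \<in> {..<p}" "Q \<in> paths p 1 (V (Suc r) b)"
    then have "snd Q \<noteq> []"
      using length_blocks_paths_V[OF assms(1)] by fastforce
    then show "des p 1 (snd (extend_path p (Suc r) b c Q)) =
        des p 1 (snd Q) + ?junction b Q + of_bool (descent_pair (VW_block p b c) (WV_block p b))"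
      by (simp add: extend_path_def des_append2)
  qed
  also have "\<dots> = (\<Sum>b<p. fibM p 1 (V (Suc r) b)
      + (if r = 0 then 0 else (p - 1) * p ^ (r - 1) * ?J b)
      + (p - 1) * p ^ r * of_bool (descent_pair (VW_block p b c) (WV_block p b)))"
    using junction card_paths_V[OF assms(1)] by (simp add: sum.distrib fibM_def)
  also have "\<dots> = (\<Sum>b<p. fibM p 1 (V (Suc r) b))
    + (if r = 0 then 0 else (p - 1) * p ^ (r - 1) * junction_descents p c)
    + (p - 1) * p ^ r * inner_descents p c"
    by (simp add: sum.distrib sum_distrib_left inner_descents_def junction_descents_def)
  finally show ?thesis .
qed

lemma fibM_V_1:
  assumes "p = 2 * h + 1" "h \<ge> 1" "b < p ^ k"
  shows "fibM p k (V 1 b) = h"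
proof -
  have "fibM p k (V 1 b) = (\<Sum>t\<le>p - 2. des p k (snd (initial_path p k b t)))"
    unfolding fibM_def using assms by (intro sum_paths_V_1) simp_all
  also have "\<dots> = (\<Sum>t\<le>p - 2. of_bool (t < h))"
    using assms by (intro sum.cong) (auto simp: initial_path_def des_single)
  also have "\<dots> = card ({..p - 2} \<inter> {t. t < h})"
    by (simp add: of_bool_def sum.If_cases)
  also have "{..p - 2} \<inter> {t. t < h} = {..<h}"
    using assms by auto
  finally show ?thesis
    by simp
qed

lemma descent_pair_VW_WV_iff:
  "descent_pair (VW_block p b c) (WV_block p b) \<longleftrightarrow> p * b + ((p - 1) * b + c) < p * (p - 1)"
  by (auto simp: descent_pair_def VW_block_def WV_block_def diff_mult_distrib2 less_diff_conv)

lemma descent_pair_WV_VW_iff_less: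
  assumes "a < p" "b < p" "c < p"
  shows "descent_pair (WV_block p a) (VW_block p b c) \<longleftrightarrow> p * (p - 1) < p * a + ((p - 1) * b + c)"
proof -
  have "(p - 1) * (p - 1) + (p - 1) = p * (p - 1)"
    using assms by (cases p) (simp_all add: algebra_simps)
  moreover have "(p - 1) * b \<le> (p - 1) * (p - 1)"
    using assms by (intro mult_le_mono2) linarith
  ultimately have "(p - 1) * b + c \<le> p * (p - 1)"
    using assms by linarith
  moreover have "p * a \<le> p * (p - 1)"
    using assms by (intro mult_le_mono2) linarith
  moreover have "p * (p - 1 - a) = p * (p - 1) - p * a"
    by (simp add: diff_mult_distrib2)
  ultimately show ?thesis
    unfolding descent_pair_def VW_block_def WV_block_def fst_conv snd_conv by linarith
qed

lemma descent_pair_WV_VW_iff: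
  assumes "a < p" "b < p" "c < p"
  shows "descent_pair (WV_block p a) (VW_block p b c) \<longleftrightarrow> p \<le> a + b \<or> (a + b = p - 1 \<and> b < c)"
proof -
  have pb: "(p - 1) * b + b = p * b" and pp: "p * (p - 1) + p = p * p"
    using assms by (cases p; simp add: algebra_simps)+
  consider "p \<le> a + b" | "a + b = p - 1" | "a + b + 1 \<le> p - 1"
    by linarith
  then show ?thesis
  proof cases
    case 1
    then have "p * p \<le> p * a + p * b"
      by (metis add_mult_distrib2 mult_le_mono2)
    with 1 pb pp assms show ?thesis
      unfolding descent_pair_WV_VW_iff_less[OF assms] by linarith
  next
    case 2
    then have "p * a + p * b = p * (p - 1)"
      by (metis add_mult_distrib2)
    with 2 pb assms show ?thesis
      unfolding descent_pair_WV_VW_iff_less[OF assms] by linarith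
  next
    case 3
    then have "p * a + p * b + p \<le> p * (p - 1)"
      by (metis add_mult_distrib2 mult.right_neutral mult_le_mono2)
    with 3 pb assms show ?thesis
      unfolding descent_pair_WV_VW_iff_less[OF assms] by linarith
  qed
qed

lemma descent_pair_VW_WV_odd_iff:
  assumes "c < 2 * h + 1"
  shows "descent_pair (VW_block (2 * h + 1) b c) (WV_block (2 * h + 1) b) \<longleftrightarrow> b < h \<or> (b = h \<and> c < h)"
proof -
  consider "b + 1 \<le> h" | "b = h" | "h + 1 \<le> b"
    by linarith
  then show ?thesis
  proof cases
    case 1
    then have "(4 * h + 1) * (b + 1) \<le> (4 * h + 1) * h"
      by (rule mult_le_mono2)
    with 1 assms show ?thesis
      by (simp add: descent_pair_VW_WV_iff algebra_simps)
  next
    case 2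
    with assms show ?thesis
      by (simp add: descent_pair_VW_WV_iff algebra_simps)
  next
    case 3
    then have "(4 * h + 1) * (h + 1) \<le> (4 * h + 1) * b"
      by (rule mult_le_mono2)
    with 3 assms show ?thesis
      by (simp add: descent_pair_VW_WV_iff algebra_simps)
  qed
qed

lemma inner_descents_odd:
  assumes "c < 2 * h + 1"
  shows "inner_descents (2 * h + 1) c = h + of_bool (c < h)"
proof -
  have "inner_descents (2 * h + 1) c = (\<Sum>b<2 * h + 1. of_bool (b < h \<or> (b = h \<and> c < h)))"
    unfolding inner_descents_def descent_pair_VW_WV_odd_iff[OF assms] ..
  also have "\<dots> = card ({..<2 * h + 1} \<inter> {b. b < h \<or> (b = h \<and> c < h)})"
    by (subst sum_of_bool_eq) simp_all
  also have "{..<2 * h + 1} \<inter> {b. b < h \<or> (b = h \<and> c < h)} =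
      {..<h} \<union> (if c < h then {h} else {})"
    by auto
  finally show ?thesis
    by simp
qed

lemma junction_descents_eq:
  assumes "c < p"
  shows "junction_descents p c = (\<Sum>b<p. b) + c"
proof -
  have "(\<Sum>a<p. of_bool (descent_pair (WV_block p a) (VW_block p b c))) = b + of_bool (b < c)"
    if "b < p" for b
  proof -
    have "{..<p} \<inter> {a. descent_pair (WV_block p a) (VW_block p b c)}
        = {p - b..<p} \<union> (if b < c then {p - 1 - b} else {})"
      using that assms by (auto simp: descent_pair_WV_VW_iff)
    then show ?thesis
      using that by simp
  qed
  then have "junction_descents p c = (\<Sum>b<p. b + of_bool (b < c))"
    by (simp add: junction_descents_def)
  also have "\<dots> = (\<Sum>b<p. b) + card ({..<p} \<inter> {b. b < c})"
    by (simp add: sum.distrib)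
  also have "{..<p} \<inter> {b. b < c} = {..<c}"
    using assms by auto
  finally show ?thesis
    by simp
qed

lemma sum_lessThan_odd: "(\<Sum>b<2 * h + 1. b) = (2 * h + 1) * (h :: nat)"
  using gauss_sum_nat[of "2 * h"] by (simp add: atLeast0AtMost lessThan_Suc_atMost)

lemma sum_of_bool_less:
  assumes "h \<le> n"
  shows "(\<Sum>c<n. of_bool (c < h)) = (h :: nat)"
proof -
  have "{..<n} \<inter> {c. c < h} = {..<h}"
    using assms by auto
  then have "card ({..<n} \<inter> {c. c < h}) = h"
    by simp
  then show ?thesis
    by (subst sum_of_bool_eq) simp_all
qed

lemma fibM_V_2_odd:
  assumes "p = 2 * h + 1" "h \<ge> 1" "c < p"
  shows "fibM p 1 (V 2 c) = p * h + 2 * h * (h + of_bool (c < h))"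
  using fibM_V_Suc_Suc[of p c 0] fibM_V_1[of p h _ 1] inner_descents_odd[of c h] assms
  by (simp add: numeral_2_eq_2)

lemma fibM_V_Suc_Suc_Suc_odd:
  assumes "p = 2 * h + 1" "h \<ge> 1" "c < p"
  shows "fibM p 1 (V (Suc (Suc (Suc r))) c) = (\<Sum>b<p. fibM p 1 (V (Suc (Suc r)) b))
    + 2 * h * p ^ r * (p * h + c) + 2 * h * p ^ (r + 1) * (h + of_bool (c < h))"
  using fibM_V_Suc_Suc[of p c "Suc r"] junction_descents_eq[of c p] inner_descents_odd[of c h]
    sum_lessThan_odd[of h] assms
  by (simp add: mult.commute)

lemma sum_fibM_V_odd:
  assumes "p = 2 * h + 1" "h \<ge> 1"
  shows "(\<Sum>b<p. fibM p 1 (V (Suc (Suc r)) b)) = p ^ r * h * (8 * (r + 1) * h * (h + 1) + 1)"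
proof (induction r)
  case 0
  have "(\<Sum>c<p. fibM p 1 (V 2 c)) = (\<Sum>c<p. p * h + 2 * h * h + 2 * h * of_bool (c < h))"
    using fibM_V_2_odd[OF assms] by (intro sum.cong refl) (simp add: algebra_simps)
  also have "\<dots> = p * (p * h + 2 * h * h) + 2 * h * h"
    using assms sum_of_bool_less[of h p] by (simp add: sum.distrib sum_distrib_left[symmetric])
  also have "\<dots> = h * (8 * h * (h + 1) + 1)"
    using assms by (simp add: algebra_simps)
  finally show ?case
    by (simp add: numeral_2_eq_2)
next
  case (Suc r)
  let ?T = "\<Sum>b<p. fibM p 1 (V (Suc (Suc r)) b)"
  have "(\<Sum>c<p. fibM p 1 (V (Suc (Suc (Suc r))) c)) =
      (\<Sum>c<p. ?T + 2 * h * p ^ r * (p * h) + 2 * h * p ^ (r + 1) * h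
        + 2 * h * p ^ r * c + 2 * h * p ^ (r + 1) * of_bool (c < h))"
    using fibM_V_Suc_Suc_Suc_odd[OF assms] by (intro sum.cong refl) (simp add: algebra_simps)
  also have "\<dots> = p * (?T + 2 * h * p ^ r * (p * h) + 2 * h * p ^ (r + 1) * h)
      + 2 * h * p ^ r * (p * h) + 2 * h * p ^ (r + 1) * h"
    using assms sum_of_bool_less[of h p] sum_lessThan_odd[of h]
    by (simp add: sum.distrib sum_distrib_left[symmetric])
  also have "\<dots> = p ^ Suc r * h * (8 * (Suc r + 1) * h * (h + 1) + 1)"
    using Suc assms by (simp add: algebra_simps)
  finally show ?case .
qed

lemma fibM_V_odd:
  assumes "p = 2 * h + 1" "h \<ge> 1" "c < p"
  shows "fibM p 1 (V (Suc (Suc (Suc r))) c) = p ^ r * h * (8 * (r + 1) * h * (h + 1) + 1)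
    + 2 * h * p ^ r * (p * h + c) + 2 * h * p ^ (r + 1) * (h + of_bool (c < h))"
  by (simp only: fibM_V_Suc_Suc_Suc_odd[OF assms] sum_fibM_V_odd[OF assms(1,2)])

theorem mainTheorem6:
  fixes p s t :: nat
  assumes "prime p" and "odd p" and "s \<ge> 3" and "t \<le> p - 1"
  shows "real (fibM p 1 (V s t)) =
    (if real t < (real p - 1) / 2
     then real p ^ (s - 3) * (real p - 1) / 2 *
            (2 * (real s - 1) * real p ^ 2 + 2 * real t - (2 * real s - 5))
     else real p ^ (s - 3) * (real p - 1) / 2 *
            (2 * (real s - 1) * real p ^ 2 + 2 * real t - 2 * real p - (2 * real s - 5)))"
proof -
  obtain h where p: "p = 2 * h + 1"
    using \<open>odd p\<close> oddE by blast
  moreover have "p \<ge> 2"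
    using \<open>prime p\<close> prime_ge_2_nat by blast
  ultimately have "h \<ge> 1"
    by simp
  define r where "r = s - 3"
  then have s: "s = Suc (Suc (Suc r))" "real s = real r + 3"
    using \<open>s \<ge> 3\<close> by simp_all
  have "t < p"
    using \<open>t \<le> p - 1\<close> p by simp
  have cond: "real t < (real p - 1) / 2 \<longleftrightarrow> t < h"
    using p by auto
  have rp: "real p = 2 * real h + 1"
    using p by simp
  have "real (fibM p 1 (V s t)) = real p ^ r * h * (8 * (r + 1) * h * (h + 1) + 1)
      + 2 * h * real p ^ r * (real p * h + t) + 2 * h * real p ^ (r + 1) * (h + of_bool (t < h))"
    using fibM_V_odd[OF p \<open>h \<ge> 1\<close> \<open>t < p\<close>, of r] unfolding s(1)
    by (simp add: algebra_simps)
  then show ?thesis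
    unfolding r_def[symmetric] s(2) cond rp
    by (cases "t < h") (simp_all add: algebra_simps power2_eq_square)
qed

end
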